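(* Let $(\Lambda,m_\Lambda)$ be a separated set with multiplicity and finite height, and let $(\Gamma,m_\Gamma)\in W_{\mathbb{Z}}(\Lambda,m_\Lambda)$. Then $D^-(\Gamma,m_\Gamma)\ge D^-(\Lambda,m_\Lambda)$.
   Context: A set with multiplicity is a pair $(\Lambda,m_\Lambda)$, $\Lambda\subseteq\mathbb{R}$, $m_\Lambda:\Lambda\to\mathbb{N}$; height $N=\sup m_\Lambda$; separated means $\inf\{|\lambda-\lambda'|:\lambda\ne\lambda'\}>0$. Let $\Lambda^j=\{\lambda:m_\Lambda(\lambda)\ge j\}$, $j=1,\dots,N$. A sequence of sets $\Lambda_n$ converges weakly to $\Lambda'$ if for every bounded open interval $(a,b)$ and $\varepsilon>0$, for all large $n$: $\Lambda_n\cap(a,b)\subseteq\Lambda'+(-\varepsilon,\varepsilon)$ and $\Lambda'\cap(a,b)\subseteq\Lambda_n+(-\varepsilon,\varepsilon)$. $(\Gamma,m_\Gamma)\in W_{\mathbb{Z}}(\Lambda,m_\Lambda)$ means: there are sets $\Gamma^1,\dots,\Gamma^N$ and a sequence $(k_n)\subseteq\mathbb{Z}$ such that $\Lambda^j+k_n$ converges weakly to $\Gamma^j$ for every $j$, and $\Gamma:=\Gamma^1$, $m_\Gamma(\gamma):=\max\{j:\gamma\in\Gamma^j\}$. $D^-(\Lambda,m_\Lambda)=\liminf_{r\to\infty}\inf_{x\in\mathbb{R}}\frac{1}{2r}\sum_{\lambda\in\Lambda\cap[x-r,x+r]}m_\Lambda(\lambda)$. *)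

theory Defs
  imports "HOL-Analysis.Analysis"
begin

definition mult_set :: "real set \<Rightarrow> (real \<Rightarrow> nat) \<Rightarrow> bool" where
  "mult_set L m \<longleftrightarrow> (\<forall>l\<in>L. 1 \<le> m l)"

definition separated :: "real set \<Rightarrow> bool" where
  "separated L \<longleftrightarrow> (\<exists>\<delta>>0. \<forall>l\<in>L. \<forall>l'\<in>L. l \<noteq> l' \<longrightarrow> \<delta> \<le> \<bar>l - l'\<bar>)"

definition finite_height :: "real set \<Rightarrow> (real \<Rightarrow> nat) \<Rightarrow> bool" where
  "finite_height L m \<longleftrightarrow> bdd_above (m ` L)"

definition level :: "real set \<Rightarrow> (real \<Rightarrow> nat) \<Rightarrow> nat \<Rightarrow> real set" where
  "level L m j = {l \<in> L. j \<le> m l}"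

definition weak_conv :: "(nat \<Rightarrow> real set) \<Rightarrow> real set \<Rightarrow> bool" where
  "weak_conv Ls L' \<longleftrightarrow>
     (\<forall>a b \<epsilon>. \<epsilon> > 0 \<longrightarrow>
        (\<forall>\<^sub>F n in sequentially.
           (\<forall>x \<in> Ls n \<inter> {a<..<b}. \<exists>y\<in>L'. \<bar>x - y\<bar> < \<epsilon>) \<and>
           (\<forall>y \<in> L' \<inter> {a<..<b}. \<exists>x\<in>Ls n. \<bar>x - y\<bar> < \<epsilon>)))"

definition W_Z :: "real set \<Rightarrow> (real \<Rightarrow> nat) \<Rightarrow> (real set \<times> (real \<Rightarrow> nat)) set" where
  "W_Z L m = {(G, mG). \<exists>Gs :: nat \<Rightarrow> real set. \<exists>k :: nat \<Rightarrow> int.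
      (\<forall>j\<ge>1. weak_conv (\<lambda>n. (\<lambda>l. l + real_of_int (k n)) ` level L m j) (Gs j)) \<and>
      G = Gs 1 \<and>
      (\<forall>g\<in>G. mG g = Max {j. 1 \<le> j \<and> g \<in> Gs j})}"

definition lower_density :: "real set \<Rightarrow> (real \<Rightarrow> nat) \<Rightarrow> ereal" where
  "lower_density L m = Liminf at_top (\<lambda>r::real.
      INF x::real. ereal ((\<Sum>l\<in>L \<inter> {x - r..x + r}. real (m l)) / (2 * r)))"

end

theory Submission
  imports Defs
begin

text \<open>Let \<open>\<Lambda>\<close> be \<open>\<delta>\<close>-separated and put \<open>\<epsilon> = \<delta> / 2\<close>. Weak limits of \<open>\<delta>\<close>-separated sets are
\<open>\<delta>\<close>-separated, hence closed, so every limit level \<open>\<Gamma>\<^sup>j\<close> lies in \<open>\<Gamma> = \<Gamma>\<^sup>1\<close>, and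
\<open>\<Gamma>\<^sup>j = {}\<close> above the height of \<open>\<Lambda>\<close>. Given a window \<open>[x - r, x + r]\<close>, for large \<open>n\<close> each
point of \<open>\<Lambda>\<^sup>j + k\<^sub>n\<close> in the shrunken window \<open>[x - r + \<epsilon>, x + r - \<epsilon>]\<close> is \<open>\<epsilon>\<close>-close to a
point of \<open>\<Gamma>\<^sup>j\<close> in \<open>[x - r, x + r]\<close>, and separation makes this assignment injective.
Summing over the levels, the weighted count of \<open>\<Lambda>\<close> in some window of radius \<open>r - \<epsilon>\<close> is at
most that of \<open>\<Gamma>\<close> in the given window of radius \<open>r\<close>; as \<open>(r - \<epsilon>) / r \<rightarrow> 1\<close>, the lower
densities compare.\<close>

definition separated_by :: "real \<Rightarrow> real set \<Rightarrow> bool" where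
  "separated_by \<delta> S \<longleftrightarrow> (\<forall>x\<in>S. \<forall>y\<in>S. x \<noteq> y \<longrightarrow> \<delta> \<le> \<bar>x - y\<bar>)"

lemma separated_iff_separated_by: "separated S \<longleftrightarrow> (\<exists>\<delta>>0. separated_by \<delta> S)"
  by (simp add: separated_def separated_by_def)

lemma separated_by_subset: "separated_by \<delta> S \<Longrightarrow> T \<subseteq> S \<Longrightarrow> separated_by \<delta> T"
  unfolding separated_by_def by blast

lemma separated_by_translate [simp]:
  "separated_by \<delta> ((\<lambda>x. x + c) ` S) \<longleftrightarrow> separated_by \<delta> S"
  unfolding separated_by_def by auto

lemma separated_by_closed: "\<delta> > 0 \<Longrightarrow> separated_by \<delta> S \<Longrightarrow> closed S"
  by (rule discrete_imp_closed[of \<delta>]) (auto simp: separated_by_def dist_real_def, meson not_le)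

lemma separated_by_finite_Int_atLeastAtMost:
  assumes "\<delta> > 0" and "separated_by \<delta> S"
  shows "finite (S \<inter> {a..b})"
proof -
  have "inj_on (\<lambda>x. \<lfloor>x / \<delta>\<rfloor>) (S \<inter> {a..b})"
  proof (rule inj_onI)
    fix x y assume "x \<in> S \<inter> {a..b}" "y \<in> S \<inter> {a..b}" and "\<lfloor>x / \<delta>\<rfloor> = \<lfloor>y / \<delta>\<rfloor>"
    moreover from \<open>\<lfloor>x / \<delta>\<rfloor> = \<lfloor>y / \<delta>\<rfloor>\<close> have "\<bar>x / \<delta> - y / \<delta>\<bar> < 1" by linarith
    then have "\<bar>x - y\<bar> < \<delta>"
      using assms(1) by (simp add: diff_divide_distrib[symmetric] divide_less_eq)
    ultimately show "x = y" using assms(2) unfolding separated_by_def by force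
  qed
  moreover have "(\<lambda>x. \<lfloor>x / \<delta>\<rfloor>) ` (S \<inter> {a..b}) \<subseteq> {\<lfloor>a / \<delta>\<rfloor>..\<lfloor>b / \<delta>\<rfloor>}"
    using assms(1) by (auto intro!: floor_mono divide_right_mono)
  ultimately show ?thesis
    by (metis finite_atLeastAtMost_int finite_imageD finite_subset)
qed

lemma weak_convD:
  assumes "weak_conv Ls L'" and "\<epsilon> > 0"
  shows weak_convD_seq: "\<forall>\<^sub>F n in sequentially. \<forall>x \<in> Ls n \<inter> {a<..<b}. \<exists>y\<in>L'. \<bar>x - y\<bar> < \<epsilon>"
    and weak_convD_limit: "\<forall>\<^sub>F n in sequentially. \<forall>y \<in> L' \<inter> {a<..<b}. \<exists>x\<in>Ls n. \<bar>x - y\<bar> < \<epsilon>"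
proof -
  from assms have "\<forall>\<^sub>F n in sequentially.
      (\<forall>x \<in> Ls n \<inter> {a<..<b}. \<exists>y\<in>L'. \<bar>x - y\<bar> < \<epsilon>) \<and> (\<forall>y \<in> L' \<inter> {a<..<b}. \<exists>x\<in>Ls n. \<bar>x - y\<bar> < \<epsilon>)"
    unfolding weak_conv_def by blast
  then show "\<forall>\<^sub>F n in sequentially. \<forall>x \<in> Ls n \<inter> {a<..<b}. \<exists>y\<in>L'. \<bar>x - y\<bar> < \<epsilon>"
    and "\<forall>\<^sub>F n in sequentially. \<forall>y \<in> L' \<inter> {a<..<b}. \<exists>x\<in>Ls n. \<bar>x - y\<bar> < \<epsilon>"
    by (auto elim: eventually_mono)
qed

lemma weak_conv_empty:
  assumes "weak_conv (\<lambda>n. {}) H"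
  shows "H = {}"
proof (rule equals0I)
  fix y assume "y \<in> H"
  from assms have "\<forall>\<^sub>F n in sequentially. \<forall>y' \<in> H \<inter> {y - 1<..<y + 1}. \<exists>x\<in>{}. \<bar>x - y'\<bar> < 1"
    by (rule weak_convD_limit) simp
  then have "\<forall>y' \<in> H \<inter> {y - 1<..<y + 1}. \<exists>x\<in>{}. \<bar>x - y'\<bar> < (1::real)"
    by simp
  moreover have "y \<in> H \<inter> {y - 1<..<y + 1}" using \<open>y \<in> H\<close> by simp
  ultimately show False by blast
qed

lemma weak_conv_separated_by:
  assumes sep: "\<And>n. separated_by \<delta> (Ls n)" and conv: "weak_conv Ls G"
  shows "separated_by \<delta> G"
  unfolding separated_by_def
proof (intro ballI impI)
  fix g1 g2 assume g: "g1 \<in> G" "g2 \<in> G" "g1 \<noteq> g2"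
  show "\<delta> \<le> \<bar>g1 - g2\<bar>"
  proof (rule ccontr)
    assume "\<not> \<delta> \<le> \<bar>g1 - g2\<bar>"
    define e where "e = min \<bar>g1 - g2\<bar> (\<delta> - \<bar>g1 - g2\<bar>) / 3"
    have "e > 0" using \<open>\<not> \<delta> \<le> \<bar>g1 - g2\<bar>\<close> g(3) by (simp add: e_def)
    obtain n where n: "\<forall>y \<in> G \<inter> {min g1 g2 - 1<..<max g1 g2 + 1}. \<exists>x\<in>Ls n. \<bar>x - y\<bar> < e"
      using eventually_happens'[OF sequentially_bot weak_convD_limit[OF conv \<open>e > 0\<close>,
            where a = "min g1 g2 - 1" and b = "max g1 g2 + 1"]]
      by blast
    have "g1 \<in> G \<inter> {min g1 g2 - 1<..<max g1 g2 + 1}" "g2 \<in> G \<inter> {min g1 g2 - 1<..<max g1 g2 + 1}"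
      using g by auto
    with n obtain x1 x2 where x: "x1 \<in> Ls n" "\<bar>x1 - g1\<bar> < e" "x2 \<in> Ls n" "\<bar>x2 - g2\<bar> < e"
      by blast
    have "\<bar>x1 - x2\<bar> \<le> \<bar>x1 - g1\<bar> + \<bar>g1 - g2\<bar> + \<bar>x2 - g2\<bar>" by linarith
    then have "\<bar>x1 - x2\<bar> < \<delta>" using x(2,4) \<open>\<not> \<delta> \<le> \<bar>g1 - g2\<bar>\<close> by (simp add: e_def)
    then have "x1 = x2" using sep[of n] x(1,3) unfolding separated_by_def by force
    then have "\<bar>g1 - g2\<bar> \<le> \<bar>x1 - g1\<bar> + \<bar>x2 - g2\<bar>" by linarith
    with x(2,4) abs_ge_zero[of "g1 - g2"] show False by (simp add: e_def)
  qed
qed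

lemma weak_conv_subset_closure:
  assumes sub: "\<And>n. Ts n \<subseteq> Ss n" and convS: "weak_conv Ss G" and convT: "weak_conv Ts H"
  shows "H \<subseteq> closure G"
proof
  fix y assume "y \<in> H"
  show "y \<in> closure G"
  proof (rule iffD2[OF closure_approachable], intro allI impI)
    fix e :: real assume "e > 0"
    then have "e / 2 > 0" by simp
    obtain n where
        near_T: "\<forall>y' \<in> H \<inter> {y - e<..<y + e}. \<exists>x\<in>Ts n. \<bar>x - y'\<bar> < e / 2"
      and near_G: "\<forall>x \<in> Ss n \<inter> {y - e<..<y + e}. \<exists>g\<in>G. \<bar>x - g\<bar> < e / 2"
      using eventually_happens'[OF sequentially_bot eventually_conj[OF
          weak_convD_limit[OF convT \<open>e / 2 > 0\<close>, where a = "y - e" and b = "y + e"]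
          weak_convD_seq[OF convS \<open>e / 2 > 0\<close>, where a = "y - e" and b = "y + e"]]]
      by blast
    have "y \<in> H \<inter> {y - e<..<y + e}" using \<open>y \<in> H\<close> \<open>e > 0\<close> by auto
    with near_T obtain x where x: "x \<in> Ts n" "\<bar>x - y\<bar> < e / 2" by blast
    then have "x \<in> Ss n \<inter> {y - e<..<y + e}"
      using sub x(2)[unfolded abs_less_iff] by auto
    with near_G obtain g where "g \<in> G" "\<bar>x - g\<bar> < e / 2" by blast
    with x show "\<exists>g\<in>G. dist g y < e"
      by (intro bexI[of _ g] dist_triangle_half_l[of g x e y])
        (simp_all add: dist_real_def abs_minus_commute)
  qed
qed

lemma weak_conv_subset_of_separated:
  assumes "\<delta> > 0" and "\<And>n. separated_by \<delta> (Ss n)" and "\<And>n. Ts n \<subseteq> Ss n"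
    and convS: "weak_conv Ss G" and convT: "weak_conv Ts H"
  shows "H \<subseteq> G"
  using weak_conv_subset_closure[OF assms(3) convS convT]
    separated_by_closed[OF assms(1) weak_conv_separated_by[OF assms(2) convS]]
  by (simp add: closure_closed)

lemma card_Int_le_weak_limit:
  assumes sep: "\<And>n. separated_by \<delta> (Ls n)" and conv: "weak_conv Ls H"
    and "\<epsilon> > 0" "2 * \<epsilon> \<le> \<delta>" and fin: "finite (H \<inter> {a..b})"
  shows "\<forall>\<^sub>F n in sequentially. card (Ls n \<inter> {a + \<epsilon>..b - \<epsilon>}) \<le> card (H \<inter> {a..b})"
  using weak_convD_seq[OF conv \<open>\<epsilon> > 0\<close>, of a b]
proof (rule eventually_mono)
  fix n assume near: "\<forall>x \<in> Ls n \<inter> {a<..<b}. \<exists>y\<in>H. \<bar>x - y\<bar> < \<epsilon>"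
  define A where "A = Ls n \<inter> {a + \<epsilon>..b - \<epsilon>}"
  have "\<forall>x\<in>A. \<exists>y. y \<in> H \<and> \<bar>x - y\<bar> < \<epsilon>"
    using near \<open>\<epsilon> > 0\<close> by (force simp: A_def)
  then have "\<exists>f. \<forall>x\<in>A. f x \<in> H \<and> \<bar>x - f x\<bar> < \<epsilon>"
    by (rule bchoice)
  then obtain f where f: "\<And>x. x \<in> A \<Longrightarrow> f x \<in> H \<and> \<bar>x - f x\<bar> < \<epsilon>"
    by blast
  have "inj_on f A"
  proof (rule inj_onI)
    fix x1 x2 assume "x1 \<in> A" "x2 \<in> A" "f x1 = f x2"
    have "\<bar>x1 - f x1\<bar> < \<epsilon>" "\<bar>x2 - f x2\<bar> < \<epsilon>"
      using f \<open>x1 \<in> A\<close> \<open>x2 \<in> A\<close> by auto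
    with \<open>f x1 = f x2\<close> \<open>2 * \<epsilon> \<le> \<delta>\<close> have "\<bar>x1 - x2\<bar> < \<delta>" by linarith
    with \<open>x1 \<in> A\<close> \<open>x2 \<in> A\<close> sep[of n] show "x1 = x2"
      unfolding separated_by_def A_def by force
  qed
  moreover have "f ` A \<subseteq> H \<inter> {a..b}"
    using f by (force simp: A_def)
  ultimately show "card A \<le> card (H \<inter> {a..b})"
    using card_inj_on_le fin by blast
qed

lemma card_translate_Int_atLeastAtMost:
  fixes c :: real
  shows "card ((\<lambda>x. x + c) ` S \<inter> {a..b}) = card (S \<inter> {a - c..b - c})"
proof -
  have "(\<lambda>x. x + c) ` S \<inter> {a..b} = (\<lambda>x. x + c) ` (S \<inter> {a - c..b - c})"
    by force
  then show ?thesis by (simp add: card_image)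
qed

lemma card_le_Max_nat:
  fixes S :: "nat set"
  assumes "finite S" and "0 \<notin> S"
  shows "card S \<le> Max S"
proof -
  have "S \<subseteq> {1..Max S}" using assms by (auto simp: Suc_le_eq intro: gr0I)
  then show ?thesis using card_mono[of "{1..Max S}" S] by simp
qed

lemma level_subset: "level L m j \<subseteq> L"
  by (auto simp: level_def)

lemma card_levels_le_Max:
  fixes Gs :: "nat \<Rightarrow> 'a set"
  assumes "\<And>j. j > N \<Longrightarrow> g \<notin> Gs j"
  shows "card {j\<in>{1..N}. g \<in> Gs j} \<le> Max {j. 1 \<le> j \<and> g \<in> Gs j}"
proof -
  have "{j. 1 \<le> j \<and> g \<in> Gs j} = {j\<in>{1..N}. g \<in> Gs j}"
    using assms by (force simp: not_le[symmetric])
  moreover have "card {j\<in>{1..N}. g \<in> Gs j} \<le> Max {j\<in>{1..N}. g \<in> Gs j}"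
    by (rule card_le_Max_nat) auto
  ultimately show ?thesis by simp
qed

lemma sum_mult_eq_sum_card_level:
  assumes "finite (L \<inter> I)" and "\<forall>l\<in>L. m l \<le> N"
  shows "(\<Sum>l\<in>L \<inter> I. m l) = (\<Sum>j\<in>{1..N}. card (level L m j \<inter> I))"
proof -
  have "(\<Sum>l\<in>L \<inter> I. m l) = (\<Sum>l\<in>L \<inter> I. card {j\<in>{1..N}. j \<le> m l})"
  proof (rule sum.cong)
    fix l assume "l \<in> L \<inter> I"
    with assms(2) have "{j\<in>{1..N}. j \<le> m l} = {1..m l}" by auto
    then show "m l = card {j\<in>{1..N}. j \<le> m l}" by simp
  qed simp
  also have "\<dots> = (\<Sum>j\<in>{1..N}. card {l\<in>L \<inter> I. j \<le> m l})"
    by (rule sum_multicount_gen) (use assms(1) in auto)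
  also have "\<dots> = (\<Sum>j\<in>{1..N}. card (level L m j \<inter> I))"
    by (intro sum.cong arg_cong[where f = card]) (auto simp: level_def)
  finally show ?thesis .
qed

lemma sum_card_le_sum_mult:
  fixes N :: nat
  assumes "finite (G \<inter> I)" and "\<forall>j\<in>{1..N}. Gs j \<subseteq> G"
    and "\<forall>g\<in>G. card {j\<in>{1..N}. g \<in> Gs j} \<le> mG g"
  shows "(\<Sum>j\<in>{1..N}. card (Gs j \<inter> I)) \<le> (\<Sum>g\<in>G \<inter> I. mG g)"
proof -
  have "(\<Sum>j\<in>{1..N}. card (Gs j \<inter> I)) = (\<Sum>j\<in>{1..N}. card {g\<in>G \<inter> I. g \<in> Gs j})"
    using assms(2) by (intro sum.cong arg_cong[where f = card]) auto
  also have "\<dots> = (\<Sum>g\<in>G \<inter> I. card {j\<in>{1..N}. g \<in> Gs j})"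
    by (rule sum_multicount_gen[symmetric]) (use assms(1) in auto)
  also have "\<dots> \<le> (\<Sum>g\<in>G \<inter> I. mG g)"
    using assms(3) by (intro sum_mono) auto
  finally show ?thesis .
qed

lemma window_sum_le_limit_window:
  fixes c :: "nat \<Rightarrow> real"
  assumes "\<delta> > 0" "\<epsilon> > 0" "2 * \<epsilon> \<le> \<delta>" and sepL: "separated_by \<delta> L"
    and height: "\<forall>l\<in>L. m l \<le> N"
    and conv: "\<forall>j\<in>{1..N}. weak_conv (\<lambda>n. (\<lambda>l. l + c n) ` level L m j) (Gs j)"
    and sub: "\<forall>j\<in>{1..N}. Gs j \<subseteq> G" and sepG: "separated_by \<delta> G"
    and mult: "\<forall>g\<in>G. card {j\<in>{1..N}. g \<in> Gs j} \<le> mG g"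
  shows "\<exists>z. (\<Sum>l\<in>L \<inter> {z - (r - \<epsilon>)..z + (r - \<epsilon>)}. real (m l))
              \<le> (\<Sum>g\<in>G \<inter> {x - r..x + r}. real (mG g))"
proof -
  have finG: "finite (G \<inter> {a..b})" for a b
    by (rule separated_by_finite_Int_atLeastAtMost[OF \<open>\<delta> > 0\<close> sepG])
  have "\<forall>\<^sub>F n in sequentially. \<forall>j\<in>{1..N}.
      card ((\<lambda>l. l + c n) ` level L m j \<inter> {x - r + \<epsilon>..x + r - \<epsilon>}) \<le> card (Gs j \<inter> {x - r..x + r})"
  proof (rule eventually_ball_finite, simp, intro ballI)
    fix j assume j: "j \<in> {1..N}"
    have "finite (Gs j \<inter> {x - r..x + r})"
      using finG sub j by (meson Int_mono finite_subset order_refl)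
    with conv j show "\<forall>\<^sub>F n in sequentially.
        card ((\<lambda>l. l + c n) ` level L m j \<inter> {x - r + \<epsilon>..x + r - \<epsilon>}) \<le> card (Gs j \<inter> {x - r..x + r})"
      using card_Int_le_weak_limit[of \<delta> _ "Gs j" \<epsilon> "x - r" "x + r"] assms(2,3)
        separated_by_subset[OF sepL level_subset]
      by simp
  qed
  then obtain n where n: "\<forall>j\<in>{1..N}.
      card ((\<lambda>l. l + c n) ` level L m j \<inter> {x - r + \<epsilon>..x + r - \<epsilon>}) \<le> card (Gs j \<inter> {x - r..x + r})"
    using eventually_happens'[OF sequentially_bot] by blast
  define z where "z = x - c n"
  have "(\<Sum>l\<in>L \<inter> {z - (r - \<epsilon>)..z + (r - \<epsilon>)}. m l)
      = (\<Sum>j\<in>{1..N}. card (level L m j \<inter> {z - (r - \<epsilon>)..z + (r - \<epsilon>)}))"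
    by (rule sum_mult_eq_sum_card_level[OF separated_by_finite_Int_atLeastAtMost[OF \<open>\<delta> > 0\<close> sepL] height])
  also have "\<dots> \<le> (\<Sum>j\<in>{1..N}. card (Gs j \<inter> {x - r..x + r}))"
    using n by (intro sum_mono) (simp add: card_translate_Int_atLeastAtMost z_def algebra_simps)
  also have "\<dots> \<le> (\<Sum>g\<in>G \<inter> {x - r..x + r}. mG g)"
    by (rule sum_card_le_sum_mult[OF finG sub mult])
  finally show ?thesis
    by (intro exI[of _ z]) (metis of_nat_le_iff of_nat_sum)
qed

lemma Liminf_at_top_le_shrunk:
  fixes f g :: "real \<Rightarrow> ereal" and \<epsilon> :: real
  assumes shrink: "\<And>b r. r > \<epsilon> \<Longrightarrow> ereal b < f (r - \<epsilon>) \<Longrightarrow> ereal (b * (r - \<epsilon>) / r) \<le> g r"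
  shows "Liminf at_top f \<le> Liminf at_top g"
proof (rule le_Liminf_iff[THEN iffD2], intro allI impI)
  fix y assume "y < Liminf at_top f"
  then obtain b where "y < ereal b" and b: "ereal b < Liminf at_top f"
    using ereal_dense2 by blast
  then obtain a where "y < ereal a" "a < b"
    using ereal_dense2 by force
  from less_LiminfD[OF b] obtain R where R: "\<And>r. r \<ge> R \<Longrightarrow> ereal b < f r"
    by (auto simp: eventually_at_top_linorder)
  have "((\<lambda>r. b - b * \<epsilon> / r) \<longlongrightarrow> b - 0) at_top"
    by (intro tendsto_intros tendsto_divide_0[OF tendsto_const]
        filterlim_at_top_imp_at_infinity filterlim_ident)
  moreover have "\<forall>\<^sub>F r in at_top. b - b * \<epsilon> / r = b * (r - \<epsilon>) / r"
    using eventually_gt_at_top[of 0] by eventually_elim (simp add: field_simps)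
  ultimately have "((\<lambda>r. b * (r - \<epsilon>) / r) \<longlongrightarrow> b) at_top"
    by (simp add: tendsto_cong)
  then have "\<forall>\<^sub>F r in at_top. a < b * (r - \<epsilon>) / r"
    using \<open>a < b\<close> by (rule order_tendstoD)
  moreover have "\<forall>\<^sub>F r in at_top. r > \<epsilon> \<and> ereal b < f (r - \<epsilon>)"
    using R by (auto simp: eventually_at_top_linorder intro!: exI[of _ "max (\<epsilon> + 1) (R + \<epsilon>)"])
  ultimately show "\<forall>\<^sub>F r in at_top. y < g r"
  proof eventually_elim
    case (elim r)
    with shrink have "ereal (b * (r - \<epsilon>) / r) \<le> g r" by blast
    with \<open>y < ereal a\<close> elim(1) show "y < g r"
      by (meson ereal_less_eq(3) less_le_trans order_less_imp_le)
  qed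
qed

definition min_window_density :: "real set \<Rightarrow> (real \<Rightarrow> nat) \<Rightarrow> real \<Rightarrow> ereal" where
  "min_window_density S w r = (INF x. ereal ((\<Sum>l\<in>S \<inter> {x - r..x + r}. real (w l)) / (2 * r)))"

lemma lower_density_eq_Liminf: "lower_density S w = Liminf at_top (min_window_density S w)"
  by (simp add: lower_density_def min_window_density_def[abs_def])

lemma min_window_density_shrunk:
  assumes "0 \<le> \<epsilon>" "\<epsilon> < r"
    and count: "\<And>x. \<exists>z. (\<Sum>l\<in>L \<inter> {z - (r - \<epsilon>)..z + (r - \<epsilon>)}. real (m l))
                        \<le> (\<Sum>g\<in>G \<inter> {x - r..x + r}. real (mG g))"
    and b: "ereal b < min_window_density L m (r - \<epsilon>)"
  shows "ereal (b * (r - \<epsilon>) / r) \<le> min_window_density G mG r"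
  unfolding min_window_density_def
proof (rule INF_greatest)
  fix x
  obtain z where z: "(\<Sum>l\<in>L \<inter> {z - (r - \<epsilon>)..z + (r - \<epsilon>)}. real (m l))
                      \<le> (\<Sum>g\<in>G \<inter> {x - r..x + r}. real (mG g))"
    using count by blast
  have "ereal b < ereal ((\<Sum>l\<in>L \<inter> {z - (r - \<epsilon>)..z + (r - \<epsilon>)}. real (m l)) / (2 * (r - \<epsilon>)))"
    using b unfolding min_window_density_def by (meson INF_lower UNIV_I less_le_trans)
  with z assms(1,2) have "b * (2 * (r - \<epsilon>)) < (\<Sum>g\<in>G \<inter> {x - r..x + r}. real (mG g))"
    by (simp add: less_divide_eq)
  with assms(1,2) show "ereal (b * (r - \<epsilon>) / r)
      \<le> ereal ((\<Sum>g\<in>G \<inter> {x - r..x + r}. real (mG g)) / (2 * r))"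
    by (simp add: divide_simps) (simp add: algebra_simps)
qed

lemma lower_density_le_if_windows_shrunk:
  assumes "0 \<le> \<epsilon>"
    and "\<And>x r. \<exists>z. (\<Sum>l\<in>L \<inter> {z - (r - \<epsilon>)..z + (r - \<epsilon>)}. real (m l))
                        \<le> (\<Sum>g\<in>G \<inter> {x - r..x + r}. real (mG g))"
  shows "lower_density L m \<le> lower_density G mG"
  unfolding lower_density_eq_Liminf
  by (rule Liminf_at_top_le_shrunk[of \<epsilon>]) (rule min_window_density_shrunk; use assms in auto)

theorem lemma3p3:
  fixes L G :: "real set" and m mG :: "real \<Rightarrow> nat"
  assumes "mult_set L m" and "separated L" and "finite_height L m"
    and "(G, mG) \<in> W_Z L m"
  shows "lower_density G mG \<ge> lower_density L m"
proof -
  obtain Gs k where conv: "\<forall>j\<ge>1. weak_conv (\<lambda>n. (\<lambda>l. l + real_of_int (k n)) ` level L m j) (Gs j)"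
    and G: "G = Gs 1" and mG: "\<forall>g\<in>G. mG g = Max {j. 1 \<le> j \<and> g \<in> Gs j}"
    using assms(4) unfolding W_Z_def by blast
  obtain \<delta> where "\<delta> > 0" and sepL: "separated_by \<delta> L"
    using assms(2) separated_iff_separated_by by blast
  obtain N where height: "\<forall>l\<in>L. m l \<le> N"
    using assms(3) unfolding finite_height_def bdd_above_def by auto
  have "level L m 1 = L"
    using assms(1) by (auto simp: mult_set_def level_def)
  with conv G have convL: "weak_conv (\<lambda>n. (\<lambda>l. l + real_of_int (k n)) ` L) G"
    by auto
  have sepG: "separated_by \<delta> G"
    by (rule weak_conv_separated_by[OF _ convL]) (simp add: sepL)
  have sub: "Gs j \<subseteq> G" if "j \<ge> 1" for j
    by (rule weak_conv_subset_of_separated[OF \<open>\<delta> > 0\<close> _ image_mono[OF level_subset]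
          convL conv[rule_format, OF that]]) (simp add: sepL)
  have empty: "Gs j = {}" if "j > N" for j
  proof -
    have "level L m j = {}" using height that by (force simp: level_def)
    then show ?thesis
      using conv[rule_format, of j] that by (simp add: weak_conv_empty)
  qed
  have mult: "card {j\<in>{1..N}. g \<in> Gs j} \<le> mG g" if "g \<in> G" for g
    using card_levels_le_Max[of N g Gs] empty mG that by simp
  show ?thesis
    using \<open>\<delta> > 0\<close> sepL height conv sub[THEN subsetD] sepG mult
    by (intro lower_density_le_if_windows_shrunk[of "\<delta> / 2"] window_sum_le_limit_window[of \<delta>]) auto
qed

end
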